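(* Consider the network formation game with validators $V$, services $S$ (nonempty), stakes $\sigma$, reward pools $R$ and target restaking degree $d^*>0$. Assume that for every $s\in S$, $R(s)>0$ and $d^*\cdot\frac{R(s)}{\sum_{s'\in S}R(s')}\le1$. Then the allocation profile $$w^*(v,s)=d^*\cdot\frac{R(s)}{\sum_{s'\in S}R(s')}\cdot\sigma(v)\qquad(v\in V,\ s\in S)$$ is a Nash equilibrium of the game, and under it every validator has restaking degree exactly $d^*$.
   Context: Network formation game: $V$ is a finite nonempty set of validators with stakes $\sigma:V\to\mathbb{R}_{>0}$, $S$ is a finite set of services with reward pools $R:S\to\mathbb{R}_{>0}$, and $d^*>0$ is a target restaking degree. Each validator $v$ chooses allocations $w(v,s)\in[0,\sigma(v)]$ for all $s\in S$; the profile is $w:V\times S\to\mathbb{R}_{\ge0}$. The restaking degree of $v$ is $\deg(v)=\sum_{s\in S}w(v,s)/\sigma(v)$. The utility of $v$ is $$u_v(w)=\begin{cases}\sum_{s\in S}\frac{w(v,s)}{\sum_{v'\in V}w(v',s)}R(s)&\text{if }\deg(v)\le d^*,\\0&\text{otherwise,}\end{cases}$$ where a term with $w(v,s)=0$ is taken to be $0$. A Nash equilibrium is a profile in which no single validator can strictly increase its utility by unilaterally changing its own allocations. *)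

theory Defs
  imports Complex_Main
begin

definition feasible :: "'v set \<Rightarrow> 's set \<Rightarrow> ('v \<Rightarrow> real) \<Rightarrow> ('v \<Rightarrow> 's \<Rightarrow> real) \<Rightarrow> bool" where
  "feasible V S sigma w \<longleftrightarrow> (\<forall>v\<in>V. \<forall>s\<in>S. 0 \<le> w v s \<and> w v s \<le> sigma v)"

definition restaking_degree :: "'s set \<Rightarrow> ('v \<Rightarrow> real) \<Rightarrow> ('v \<Rightarrow> 's \<Rightarrow> real) \<Rightarrow> 'v \<Rightarrow> real" where
  "restaking_degree S sigma w v = (\<Sum>s\<in>S. w v s) / sigma v"

definition utility :: "'v set \<Rightarrow> 's set \<Rightarrow> ('v \<Rightarrow> real) \<Rightarrow> ('s \<Rightarrow> real) \<Rightarrow> real \<Rightarrow>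
    ('v \<Rightarrow> 's \<Rightarrow> real) \<Rightarrow> 'v \<Rightarrow> real" where
  "utility V S sigma R d w v =
     (if restaking_degree S sigma w v \<le> d
      then (\<Sum>s\<in>S. if w v s = 0 then 0 else w v s / (\<Sum>v'\<in>V. w v' s) * R s)
      else 0)"

definition nash_equilibrium :: "'v set \<Rightarrow> 's set \<Rightarrow> ('v \<Rightarrow> real) \<Rightarrow> ('s \<Rightarrow> real) \<Rightarrow> real \<Rightarrow>
    ('v \<Rightarrow> 's \<Rightarrow> real) \<Rightarrow> bool" where
  "nash_equilibrium V S sigma R d w \<longleftrightarrow>
     feasible V S sigma w \<and>
     (\<forall>v\<in>V. \<forall>w'. (\<forall>v'. v' \<noteq> v \<longrightarrow> w' v' = w v') \<and>
                  (\<forall>s\<in>S. 0 \<le> w' v s \<and> w' v s \<le> sigma v)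
               \<longrightarrow> utility V S sigma R d w' v \<le> utility V S sigma R d w v)"

end

theory Submission
  imports Defs
begin

text \<open>Against fixed opponents, validator v's reward from service s is R s * x / (x + a s), where x
is its own stake on s and a s the others' stake; this is concave in x. At the proportional profile
all these concave functions have the same slope \<lambda> \<ge> 0 at v's allocation, which spends v's
whole budget d * sigma v. By concavity every admissible deviation earns at most the current
utility plus \<lambda> times the change in the spent budget, and the budget cannot grow.\<close>

lemma share_le_tangent:
  fixes x x0 a :: real
  assumes "x \<ge> 0" "x0 > 0" "a \<ge> 0"
  shows "x / (x + a) \<le> x0 / (x0 + a) + a / (x0 + a)^2 * (x - x0)"
proof -
  have pos: "x0 + a > 0" using assms by simp
  have tangent: "x0 / (x0 + a) + a / (x0 + a)^2 * (x - x0) = (x0 * (x0 + a) + a * (x - x0)) / (x0 + a)^2"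
    using pos by (simp add: power2_eq_square add_divide_distrib)
  show ?thesis
  proof (cases "x + a = 0")
    case True
    then have "x = 0" using assms by simp
    have "a * x0 \<le> (x0 + a) * x0" using assms by (simp add: algebra_simps)
    then have "0 \<le> x0 * (x0 + a) + a * (x - x0)" using \<open>x = 0\<close> by (simp add: algebra_simps)
    then show ?thesis using True tangent by simp
  next
    case False
    then have xa: "x + a > 0" using assms by simp
    have "(x0 * (x0 + a) + a * (x - x0)) * (x + a) - x * (x0 + a)^2 = a * (x - x0)^2"
      by (simp add: algebra_simps power2_eq_square)
    then have "x * (x0 + a)^2 \<le> (x0 * (x0 + a) + a * (x - x0)) * (x + a)"
      using assms by (smt (verit) mult_nonneg_nonneg zero_le_power2)
    then show ?thesis
      using tangent xa pos by (simp add: divide_le_eq le_divide_eq mult.commute)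
  qed
qed

lemma share_sum_le_of_equal_marginals:
  fixes x x0 a R :: "'s \<Rightarrow> real" and lam :: real
  assumes "finite S" "lam \<ge> 0" "(\<Sum>s\<in>S. x s) \<le> (\<Sum>s\<in>S. x0 s)"
    and "\<And>s. s \<in> S \<Longrightarrow> x s \<ge> 0 \<and> x0 s > 0 \<and> a s \<ge> 0 \<and> R s \<ge> 0"
    and "\<And>s. s \<in> S \<Longrightarrow> R s * (a s / (x0 s + a s)^2) = lam"
  shows "(\<Sum>s\<in>S. R s * (x s / (x s + a s))) \<le> (\<Sum>s\<in>S. R s * (x0 s / (x0 s + a s)))"
proof -
  have "(\<Sum>s\<in>S. R s * (x s / (x s + a s)))
      \<le> (\<Sum>s\<in>S. R s * (x0 s / (x0 s + a s) + a s / (x0 s + a s)^2 * (x s - x0 s)))"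
    using assms(4) by (intro sum_mono mult_left_mono share_le_tangent) auto
  also have "\<dots> = (\<Sum>s\<in>S. R s * (x0 s / (x0 s + a s)) + lam * (x s - x0 s))"
    using assms(5) by (intro sum.cong refl) (metis distrib_left mult.assoc)
  also have "\<dots> = (\<Sum>s\<in>S. R s * (x0 s / (x0 s + a s))) + lam * ((\<Sum>s\<in>S. x s) - (\<Sum>s\<in>S. x0 s))"
    by (simp add: sum.distrib sum_distrib_left [symmetric] sum_subtractf)
  also have "\<dots> \<le> (\<Sum>s\<in>S. R s * (x0 s / (x0 s + a s)))"
    using assms(2,3) by (simp add: mult_nonneg_nonpos)
  finally show ?thesis .
qed

text \<open>The guard w v s = 0 in the utility is harmless since 0 / y = 0 in HOL.\<close>

lemma utility_eq_share_sum:
  assumes "finite V" "v \<in> V" "restaking_degree S sigma w v \<le> d"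
  shows "utility V S sigma R d w v = (\<Sum>s\<in>S. R s * (w v s / (w v s + (\<Sum>v'\<in>V-{v}. w v' s))))"
  unfolding utility_def if_P[OF assms(3)]
  by (intro sum.cong refl) (simp add: sum.remove[OF assms(1,2)])

lemma restaking_degree_proportional:
  assumes "sigma v > 0"
  shows "restaking_degree S sigma (\<lambda>v s. c s * sigma v) v = (\<Sum>s\<in>S. c s)"
  using assms by (simp add: restaking_degree_def sum_distrib_right [symmetric])

lemma feasible_proportional:
  assumes "\<And>v. v \<in> V \<Longrightarrow> sigma v > 0" "\<And>s. s \<in> S \<Longrightarrow> 0 \<le> c s \<and> c s \<le> 1"
  shows "feasible V S sigma (\<lambda>v s. c s * sigma v)"
  unfolding feasible_def using assms by (simp add: mult_left_le_one_le less_imp_le)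

text \<open>The marginal reward R s * a / (x0 + a)^2 does not depend on s: R s, v's own stake x0 and the
others' stake a on s are all proportional to c s.\<close>

lemma proportional_deviation_not_profitable:
  fixes c R :: "'s \<Rightarrow> real" and sigma :: "'v \<Rightarrow> real" and k :: real
  defines "w \<equiv> \<lambda>v s. c s * sigma v"
  assumes "finite V" "v \<in> V" "finite S" "\<And>v. v \<in> V \<Longrightarrow> sigma v > 0"
    and "\<And>s. s \<in> S \<Longrightarrow> c s > 0" "\<And>s. R s = k * c s" "k > 0" "(\<Sum>s\<in>S. c s) = d"
    and "\<And>v'. v' \<noteq> v \<Longrightarrow> w' v' = w v'" "\<And>s. s \<in> S \<Longrightarrow> 0 \<le> w' v s"
  shows "utility V S sigma R d w' v \<le> utility V S sigma R d w v"
proof -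
  define others where "others = (\<Sum>v'\<in>V-{v}. sigma v')"
  have others_nonneg: "others \<ge> 0"
    unfolding others_def using assms(5) by (intro sum_nonneg) (auto intro: less_imp_le)
  have sv: "sigma v > 0" using assms(3,5) by simp
  have others_w': "(\<Sum>v'\<in>V-{v}. w' v' s) = c s * others" for s
    using assms(10) by (simp add: others_def w_def sum_distrib_left)
  have others_w: "(\<Sum>v'\<in>V-{v}. w v' s) = c s * others" for s
    by (simp add: others_def w_def sum_distrib_left)
  have deg: "restaking_degree S sigma w v = d"
    unfolding w_def using restaking_degree_proportional[of sigma v S c] sv assms(9) by simp
  have U: "utility V S sigma R d w v = (\<Sum>s\<in>S. R s * (w v s / (w v s + c s * others)))"
    using utility_eq_share_sum[OF assms(2,3), of S sigma w d R] deg others_w by simp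
  show ?thesis
  proof (cases "restaking_degree S sigma w' v \<le> d")
    case False
    have "0 \<le> utility V S sigma R d w v"
      unfolding U using assms(6,7,8) sv others_nonneg
      by (intro sum_nonneg) (simp add: w_def less_imp_le)
    then show ?thesis using False by (simp add: utility_def)
  next
    case True
    have budget: "(\<Sum>s\<in>S. w' v s) \<le> (\<Sum>s\<in>S. w v s)"
      using True deg sv by (simp add: restaking_degree_def divide_le_eq divide_eq_eq)
    have marginal: "R s * (c s * others / (w v s + c s * others)^2) = k * others / (sigma v + others)^2"
      if "s \<in> S" for s
    proof -
      have "R s * (c s * others / (w v s + c s * others)^2)
          = (k * c s) * (c s * others / (c s * (sigma v + others))^2)"
        by (simp add: assms(7) w_def algebra_simps)
      also have "\<dots> = k * others / (sigma v + others)^2"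
        using assms(6)[OF that] sv others_nonneg by (simp add: power_mult_distrib power2_eq_square)
      finally show ?thesis .
    qed
    have "utility V S sigma R d w' v = (\<Sum>s\<in>S. R s * (w' v s / (w' v s + c s * others)))"
      using utility_eq_share_sum[OF assms(2,3) True] others_w' by simp
    also have "\<dots> \<le> (\<Sum>s\<in>S. R s * (w v s / (w v s + c s * others)))"
      using assms(4,6,7,8,11) sv others_nonneg budget marginal
      by (intro share_sum_le_of_equal_marginals[where lam = "k * others / (sigma v + others)^2"])
        (auto simp: w_def less_imp_le)
    finally show ?thesis using U by simp
  qed
qed

theorem mainTheorem19:
  fixes V :: "'v set" and S :: "'s set" and sigma :: "'v \<Rightarrow> real"
    and R :: "'s \<Rightarrow> real" and d :: real
  assumes "finite V" "V \<noteq> {}" "finite S" "S \<noteq> {}"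
    and "\<And>v. v \<in> V \<Longrightarrow> sigma v > 0"
    and "\<And>s. s \<in> S \<Longrightarrow> R s > 0"
    and "d > 0"
    and "\<And>s. s \<in> S \<Longrightarrow> d * (R s / (\<Sum>s'\<in>S. R s')) \<le> 1"
  shows "nash_equilibrium V S sigma R d (\<lambda>v s. d * (R s / (\<Sum>s'\<in>S. R s')) * sigma v)
       \<and> (\<forall>v\<in>V. restaking_degree S sigma (\<lambda>v s. d * (R s / (\<Sum>s'\<in>S. R s')) * sigma v) v = d)"
proof -
  define T where "T = (\<Sum>s'\<in>S. R s')"
  define c where "c s = d * (R s / T)" for s
  have T_pos: "T > 0" unfolding T_def using assms(3,4,6) by (simp add: sum_pos)
  have c_pos: "c s > 0" if "s \<in> S" for s using that assms(6,7) T_pos by (simp add: c_def)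
  have R_eq: "R s = T / d * c s" for s using assms(7) T_pos by (simp add: c_def)
  have sum_c: "(\<Sum>s\<in>S. c s) = d"
    using T_pos by (simp add: c_def T_def sum_distrib_left [symmetric] sum_divide_distrib [symmetric])
  have feasible: "feasible V S sigma (\<lambda>v s. c s * sigma v)"
    using assms(5,8) c_pos by (intro feasible_proportional) (auto simp: c_def T_def less_imp_le)
  have deviation: "utility V S sigma R d w' v \<le> utility V S sigma R d (\<lambda>v s. c s * sigma v) v"
    if "v \<in> V" "\<forall>v'. v' \<noteq> v \<longrightarrow> w' v' = (\<lambda>v s. c s * sigma v) v'" "\<forall>s\<in>S. 0 \<le> w' v s \<and> w' v s \<le> sigma v"
    for v w'
    using that assms(1,3,5,7) c_pos sum_c T_pos
    by (intro proportional_deviation_not_profitable[where k = "T / d" and c = c]) (auto simp: R_eq)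
  show ?thesis
    using feasible deviation restaking_degree_proportional[of sigma _ S c] assms(5) sum_c
    unfolding nash_equilibrium_def c_def T_def by auto
qed

end
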